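(* Let $d\ge4$ and $\overline h\in\Lambda^{[d]}_u$. Then $\overline h$ has a density $\tilde h$ of the form $\tilde h=\sum_{\lambda\in\mathcal P'_d}C_\lambda u_\lambda$ with $C_\lambda\in\mathbb C$ if and only if $\frac{\partial\overline h}{\partial u}=0$ and $\frac{\partial}{\partial u_x}\frac{\delta\overline h}{\delta u}=0$.
   Context: $N=1$: $\mathcal A_u$ is the ring of polynomials in $u_k$ ($k>0$) with coefficients in $\mathbb C[[u]]$, $u=u_0$, $u_x=u_1$, graded by $\deg u_k=k$; $\partial_x=\sum u_{k+1}\partial/\partial u_k$; $\Lambda_u$ is the quotient of $\mathcal A_u$ by constants and $\mathrm{Im}\,\partial_x$, $\Lambda^{[d]}_u$ its degree-$d$ part, and a density of $\overline h$ is any $f$ with $\int f\,dx=\overline h$. $\frac{\partial}{\partial u}$ acts on local functionals (it commutes with $\partial_x$); $\frac{\delta\overline h}{\delta u}=\sum_i(-\partial_x)^i\frac{\partial h}{\partial u_i}$. For a partition $\lambda=(\lambda_1\ge\dots\ge\lambda_l)$, $u_\lambda=\prod_iu_{\lambda_i}$; $\mathcal P'_d$ is the set of partitions of $d$ with $l\ge2$, $\lambda_1=\lambda_2$, and all parts $\ge2$. *)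

theory Defs
  imports "HOL-Library.Multiset" "HOL-Computational_Algebra.Formal_Power_Series"
begin

text \<open>An element of A_u (N = 1) is represented by its coefficient function:
  a monomial prod_k u_k^{a_k} (k >= 1) is the multiset of indices k with
  multiplicities a_k; its coefficient lies in C[[u]] (formal power series in u = u_0).\<close>

type_synonym dpoly = "nat multiset \<Rightarrow> complex fps"

definition is_dpoly :: "dpoly \<Rightarrow> bool" where
  "is_dpoly f \<longleftrightarrow> finite {m. f m \<noteq> 0} \<and> (\<forall>m. 0 \<in># m \<longrightarrow> f m = 0)"

definition homogeneous :: "nat \<Rightarrow> dpoly \<Rightarrow> bool" where
  "homogeneous d f \<longleftrightarrow> (\<forall>m. f m \<noteq> 0 \<longrightarrow> sum_mset m = d)"

text \<open>partial derivative d/du_k; k = 0 is d/du acting on the C[[u]] coefficients\<close>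
definition pd :: "nat \<Rightarrow> dpoly \<Rightarrow> dpoly" where
  "pd k f = (\<lambda>m. if k = 0 then fps_deriv (f m)
                 else of_nat (count m k + 1) * f (m + {#k#}))"

text \<open>total derivative dx = sum_k u_{k+1} d/du_k\<close>
definition dx :: "dpoly \<Rightarrow> dpoly" where
  "dx f = (\<lambda>m. (if 1 \<in># m then fps_deriv (f (m - {#1#})) else 0)
     + (\<Sum>k\<in>{k. 1 \<le> k \<and> Suc k \<in># m}.
          of_nat (count (m - {#Suc k#}) k + 1) * f (m - {#Suc k#} + {#k#})))"

definition const_dp :: "complex \<Rightarrow> dpoly" where
  "const_dp c = (\<lambda>m. if m = {#} then fps_const c else 0)"

text \<open>f and g define the same local functional: f - g in C + Im dx\<close>
definition same_functional :: "dpoly \<Rightarrow> dpoly \<Rightarrow> bool" where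
  "same_functional f g \<longleftrightarrow>
     (\<exists>c g0. is_dpoly g0 \<and> (\<forall>m. f m - g m = const_dp c m + dx g0 m))"

definition ord_bound :: "dpoly \<Rightarrow> nat" where
  "ord_bound f = Max ({0} \<union> (\<Union>m\<in>{m. f m \<noteq> 0}. set_mset m))"

definition vd :: "dpoly \<Rightarrow> dpoly" where
  "vd f = (\<lambda>m. \<Sum>i\<le>ord_bound f. (((\<lambda>g n. - dx g n) ^^ i) (pd i f)) m)"

definition Pprime :: "nat \<Rightarrow> nat multiset set" where
  "Pprime d = {lam. sum_mset lam = d \<and> size lam \<ge> 2 \<and> (\<forall>k\<in>#lam. 2 \<le> k)
                  \<and> count lam (Max (set_mset lam)) \<ge> 2}"

definition partition_comb :: "nat \<Rightarrow> (nat multiset \<Rightarrow> complex) \<Rightarrow> dpoly" where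
  "partition_comb d C = (\<lambda>m. if m \<in> Pprime d then fps_const (C m) else 0)"

end

theory Submission
  imports Defs
begin

text \<open>Modulo \<open>Im \<partial>\<^sub>x\<close> every homogeneous density of degree at least 2 can be brought into
  \<^emph>\<open>reduced\<close> form, where in each monomial the largest index occurs at least twice: a monomial
  \<open>u\<^sub>a\<^sub>+\<^sub>1 u\<^sub>a\<^sup>c X\<close> in which the top variable occurs once, with \<open>X\<close> of order below \<open>a\<close>, equals
  \<open>\<partial>\<^sub>x(u\<^sub>a\<^sup>c\<^sup>+\<^sup>1 X)/(c+1)\<close> up to terms of order at most \<open>a\<close>. A nonzero reduced density has a nonzero
  variational derivative: if \<open>u\<^sub>a\<^sup>2 X\<close> occurs with \<open>a\<close> the maximal order, then the coefficient of
  \<open>u\<^sub>2\<^sub>a X\<close> in \<open>\<delta>/\<delta>u\<close> comes only from \<open>(-\<partial>\<^sub>x)\<^sup>a \<partial>/\<partial>u\<^sub>a\<close> and is nonzero.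

  The operators \<open>\<partial>/\<partial>u\<close> and, on \<open>u\<close>-free densities, \<open>\<partial>/\<partial>u\<^sub>x\<close> commute with \<open>\<partial>\<^sub>x\<close> and hence with
  \<open>\<delta>/\<delta>u\<close>, and \<open>\<delta>/\<delta>u\<close> kills \<open>Im \<partial>\<^sub>x\<close>. So for a reduced representative \<open>N\<close> of \<open>h\<close> the two
  hypotheses say that the reduced densities \<open>\<partial>N/\<partial>u\<close> and \<open>\<partial>N/\<partial>u\<^sub>x\<close> have vanishing variational
  derivative, hence vanish; then \<open>N\<close> has constant coefficients and involves only \<open>u\<^sub>k\<close> with
  \<open>k \<ge> 2\<close>, i.e. it is a combination of the \<open>u\<^sub>\<lambda>\<close>, \<open>\<lambda> \<in> P'\<^sub>d\<close>. The converse direction uses the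
  same commutation relations.\<close>

section \<open>Partial and total derivatives\<close>

definition indices_le :: "nat \<Rightarrow> nat multiset \<Rightarrow> bool" where
  "indices_le a m \<longleftrightarrow> (\<forall>x\<in>#m. x \<le> a)"

definition order_le :: "nat \<Rightarrow> dpoly \<Rightarrow> bool" where
  "order_le a f \<longleftrightarrow> (\<forall>m. f m \<noteq> 0 \<longrightarrow> indices_le a m)"

definition mul_var :: "nat \<Rightarrow> dpoly \<Rightarrow> dpoly" where
  "mul_var j g = (\<lambda>m. if j \<in># m then g (m - {#j#}) else 0)"

definition dx_upto :: "nat \<Rightarrow> dpoly \<Rightarrow> dpoly" where
  "dx_upto N f = (\<lambda>m. \<Sum>k<N. mul_var (Suc k) (pd k f) m)"

abbreviation neg_dx :: "dpoly \<Rightarrow> dpoly" where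
  "neg_dx \<equiv> (\<lambda>g n. - dx g n)"

lemma indices_le_sum_mset: "indices_le (sum_mset m) m"
  unfolding indices_le_def
proof
  fix x assume "x \<in># m"
  then obtain m' where "m = add_mset x m'" by (metis multi_member_split)
  then show "x \<le> sum_mset m" by simp
qed

lemma indices_le_mono: "indices_le a m \<Longrightarrow> a \<le> b \<Longrightarrow> indices_le b m"
  by (auto simp: indices_le_def)

lemma indices_le_add_mset [simp]: "indices_le a (add_mset x m) \<longleftrightarrow> x \<le> a \<and> indices_le a m"
  by (auto simp: indices_le_def)

lemma order_le_mono: "order_le a f \<Longrightarrow> a \<le> b \<Longrightarrow> order_le b f"
  by (auto simp: order_le_def intro: indices_le_mono)

lemma dx_eq_dx_upto:
  assumes "indices_le N m"
  shows "dx f m = dx_upto N f m"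
proof -
  have upper: "(\<Sum>k\<in>{k. 1 \<le> k \<and> Suc k \<in># m}.
          of_nat (count (m - {#Suc k#}) k + 1) * f (m - {#Suc k#} + {#k#}))
        = (\<Sum>k\<in>{1..<N}. mul_var (Suc k) (pd k f) m)"
  proof (rule sum.mono_neutral_cong_left)
    show "{k. 1 \<le> k \<and> Suc k \<in># m} \<subseteq> {1..<N}"
      using assms by (auto simp: indices_le_def)
  qed (auto simp: mul_var_def pd_def)
  show ?thesis
  proof (cases N)
    case 0
    then have "1 \<notin># m" "{k. 1 \<le> k \<and> Suc k \<in># m} = {}"
      using assms by (auto simp: indices_le_def)
    then show ?thesis unfolding dx_def dx_upto_def upper using 0 by simp
  next
    case (Suc N')
    have "(\<Sum>k<N. mul_var (Suc k) (pd k f) m)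
        = mul_var 1 (pd 0 f) m + (\<Sum>k\<in>{1..<N}. mul_var (Suc k) (pd k f) m)"
      using Suc by (simp add: lessThan_Suc_atMost sum.atLeast_Suc_atMost
          atLeast0AtMost[symmetric] atLeastLessThanSuc_atLeastAtMost)
    then show ?thesis unfolding dx_def dx_upto_def upper[symmetric]
      by (simp add: mul_var_def pd_def)
  qed
qed

lemma dx_nonzeroE:
  assumes "dx f m \<noteq> 0"
  obtains k where "Suc k \<in># m" "pd k f (m - {#Suc k#}) \<noteq> 0"
proof -
  have "dx_upto (sum_mset m) f m \<noteq> 0"
    using assms dx_eq_dx_upto[OF indices_le_sum_mset] by metis
  then obtain k where "mul_var (Suc k) (pd k f) m \<noteq> 0"
    unfolding dx_upto_def by (metis (no_types, lifting) sum.neutral)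
  then show ?thesis using that by (auto simp: mul_var_def split: if_splits)
qed

lemma pd_mul_var:
  assumes "1 \<le> j"
  shows "pd i (mul_var j g) m = mul_var j (pd i g) m + (if i = j then g m else 0)"
proof (cases "i = 0")
  case True
  then show ?thesis using assms by (simp add: pd_def mul_var_def)
next
  case i0: False
  show ?thesis
  proof (cases "j \<in># m")
    case True
    then obtain m' where m: "m = add_mset j m'" by (metis multi_member_split)
    show ?thesis using i0 by (simp add: m mul_var_def pd_def algebra_simps)
  next
    case False
    then have "count m j = 0" by (simp add: count_eq_zero_iff)
    then show ?thesis using i0 False by (simp add: mul_var_def pd_def)
  qed
qed

lemma pd_commute: "pd i (pd k f) = pd k (pd i f)"
proof (rule ext)
  fix m
  have "m + {#k#} + {#i#} = m + {#i#} + {#k#}" by (simp add: add_mset_commute)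
  then show "pd i (pd k f) m = pd k (pd i f) m"
    unfolding pd_def by (auto simp: algebra_simps)
qed

lemma pd_sum: "pd i (\<lambda>m. \<Sum>k\<in>K. F k m) m = (\<Sum>k\<in>K. pd i (F k) m)"
  by (simp add: pd_def fps_deriv_sum sum_distrib_left)

lemma pd_dx: "pd i (dx f) m = dx (pd i f) m + (if i = 0 then 0 else pd (i - 1) f m)"
proof -
  define N where "N = Suc (sum_mset m + i)"
  have bm: "indices_le N (m + {#i#})"
    unfolding N_def by (rule indices_le_mono[OF indices_le_sum_mset]) simp
  then have "pd i (dx f) m = pd i (dx_upto N f) m"
    by (auto simp: pd_def dx_eq_dx_upto)
  also have "\<dots> = (\<Sum>k<N. pd i (mul_var (Suc k) (pd k f)) m)"
    unfolding dx_upto_def by (rule pd_sum)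
  also have "\<dots> = (\<Sum>k<N. mul_var (Suc k) (pd k (pd i f)) m)
                  + (\<Sum>k<N. if i = Suc k then pd k f m else 0)"
    by (simp add: pd_mul_var pd_commute sum.distrib)
  also have "(\<Sum>k<N. if i = Suc k then pd k f m else 0) = (if i = 0 then 0 else pd (i - 1) f m)"
  proof (cases i)
    case (Suc i')
    then have "i' < N" by (simp add: N_def)
    then show ?thesis using Suc by (simp add: sum.delta')
  qed simp
  also have "(\<Sum>k<N. mul_var (Suc k) (pd k (pd i f)) m) = dx (pd i f) m"
    using dx_eq_dx_upto[of N m "pd i f"] bm by (simp add: dx_upto_def)
  finally show ?thesis .
qed

lemma pd0_dx: "pd 0 (dx f) = dx (pd 0 f)"
  using pd_dx[of 0 f] by (simp add: fun_eq_iff)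

lemma dx_add: "dx (\<lambda>m. f m + g m) m = dx f m + dx g m"
  by (simp add: dx_def sum.distrib algebra_simps)

lemma dx_zero: "dx (\<lambda>_. 0) = (\<lambda>_. 0)"
  by (simp add: dx_def fun_eq_iff)

lemma dx_diff: "dx (\<lambda>m. f m - g m) m = dx f m - dx g m"
  by (simp add: dx_def sum_subtractf algebra_simps)

lemma dx_neg: "dx (\<lambda>m. - f m) m = - dx f m"
  using dx_diff[of "\<lambda>_. 0" f m] by (simp add: dx_zero)

lemma pd_add: "pd k (\<lambda>m. f m + g m) = (\<lambda>m. pd k f m + pd k g m)"
  by (simp add: pd_def fun_eq_iff algebra_simps)

lemma pd_neg: "pd k (\<lambda>m. - f m) = (\<lambda>m. - pd k f m)"
  by (simp add: pd_def fun_eq_iff algebra_simps)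

lemma pd_diff: "pd k (\<lambda>m. f m - g m) = (\<lambda>m. pd k f m - pd k g m)"
  by (simp add: pd_def fun_eq_iff algebra_simps)

lemma pd_zero: "pd k (\<lambda>_. 0) = (\<lambda>_. 0)"
  by (simp add: pd_def fun_eq_iff)

lemma pd_const_dp: "pd k (const_dp c) = (\<lambda>_. 0)"
  by (auto simp: pd_def const_dp_def fun_eq_iff)

lemma neg_dx_pow_add: "(neg_dx ^^ i) (\<lambda>m. f m + g m) = (\<lambda>m. (neg_dx ^^ i) f m + (neg_dx ^^ i) g m)"
  by (induction i) (simp_all add: dx_add del: add_uminus_conv_diff)

lemma neg_dx_pow_neg: "(neg_dx ^^ i) (\<lambda>m. - f m) = (\<lambda>m. - (neg_dx ^^ i) f m)"
  by (induction i) (simp_all add: dx_neg)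

lemma neg_dx_pow_zero: "(neg_dx ^^ i) (\<lambda>_. 0) = (\<lambda>_. 0)"
  by (induction i) (simp_all add: dx_zero)

lemma neg_dx_pow_dx: "(neg_dx ^^ i) (dx g) = (\<lambda>m. - (neg_dx ^^ Suc i) g m)"
proof -
  have "(neg_dx ^^ Suc i) g = (neg_dx ^^ i) (neg_dx g)"
    by (simp add: funpow_Suc_right del: funpow.simps)
  then show ?thesis by (simp add: neg_dx_pow_neg)
qed

lemma pd0_neg_dx_pow: "pd 0 ((neg_dx ^^ i) g) = (neg_dx ^^ i) (pd 0 g)"
  by (induction i) (simp_all add: pd_neg pd0_dx)

lemma pd1_neg_dx_pow:
  assumes "pd 0 g = (\<lambda>_. 0)"
  shows "pd 1 ((neg_dx ^^ i) g) = (neg_dx ^^ i) (pd 1 g)"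
proof (induction i)
  case (Suc i)
  have "pd 1 ((neg_dx ^^ Suc i) g) = (\<lambda>m. - pd 1 (dx ((neg_dx ^^ i) g)) m)"
    by (simp add: pd_neg)
  also have "\<dots> = (\<lambda>m. - dx (pd 1 ((neg_dx ^^ i) g)) m)"
    using pd_dx[of 1 "(neg_dx ^^ i) g"] by (simp add: pd0_neg_dx_pow assms neg_dx_pow_zero)
  finally show ?case using Suc by simp
qed simp

section \<open>Order, finiteness and the variational derivative\<close>

lemma order_le_pd: "order_le a f \<Longrightarrow> order_le a (pd i f)"
  unfolding order_le_def pd_def
  by (auto simp del: fps_deriv_eq_0_iff split: if_splits) (metis fps_deriv_0)

lemma pd_eq_0_if_order_less: "order_le a f \<Longrightarrow> a < i \<Longrightarrow> pd i f = (\<lambda>_. 0)"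
  unfolding order_le_def pd_def by (auto simp: fun_eq_iff)

lemma order_le_dx:
  assumes "order_le a f"
  shows "order_le (Suc a) (dx f)"
  unfolding order_le_def
proof (intro allI impI)
  fix m assume "dx f m \<noteq> 0"
  then obtain k where k: "Suc k \<in># m" "pd k f (m - {#Suc k#}) \<noteq> 0"
    by (rule dx_nonzeroE)
  have "k \<le> a" using k(2) pd_eq_0_if_order_less[OF assms, of k] by (metis not_less)
  moreover have "indices_le a (m - {#Suc k#})"
    using k(2) order_le_pd[OF assms, of k] by (auto simp: order_le_def)
  moreover have "m = add_mset (Suc k) (m - {#Suc k#})" using k(1) by simp
  ultimately show "indices_le (Suc a) m"
    by (metis Suc_le_mono indices_le_add_mset indices_le_mono le_Suc_eq)
qed

lemma order_le_neg_dx_pow: "order_le a f \<Longrightarrow> order_le (a + i) ((neg_dx ^^ i) f)"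
proof (induction i)
  case (Suc i)
  then have "order_le (Suc (a + i)) (dx ((neg_dx ^^ i) f))" by (simp add: order_le_dx)
  then show ?case by (simp add: order_le_def)
qed simp

lemma order_le_add: "order_le a f \<Longrightarrow> order_le a g \<Longrightarrow> order_le a (\<lambda>m. f m + g m)"
  unfolding order_le_def by (metis add.right_neutral add.left_neutral)

lemma order_le_ord_bound:
  assumes "is_dpoly f"
  shows "order_le (ord_bound f) f"
  unfolding order_le_def indices_le_def
proof (intro allI impI ballI)
  fix m x assume "f m \<noteq> 0" "x \<in># m"
  have "finite ({0} \<union> (\<Union>m\<in>{m. f m \<noteq> 0}. set_mset m))"
    using assms by (simp add: is_dpoly_def)
  then show "x \<le> ord_bound f" unfolding ord_bound_def
    by (rule Max_ge) (use \<open>f m \<noteq> 0\<close> \<open>x \<in># m\<close> in blast)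
qed

lemma is_dpoly_pd:
  assumes "is_dpoly f"
  shows "is_dpoly (pd k f)"
proof -
  have "{m. pd k f m \<noteq> 0} \<subseteq> {m. f m \<noteq> 0} \<union> (\<lambda>m. m - {#k#}) ` {m. f m \<noteq> 0}"
  proof
    fix m assume "m \<in> {m. pd k f m \<noteq> 0}"
    then have "f m \<noteq> 0 \<or> f (m + {#k#}) \<noteq> 0"
      unfolding pd_def by (metis (mono_tags, lifting) fps_deriv_0 mem_Collect_eq mult_zero_right)
    moreover have "m = m + {#k#} - {#k#}" by simp
    ultimately show "m \<in> {m. f m \<noteq> 0} \<union> (\<lambda>m. m - {#k#}) ` {m. f m \<noteq> 0}" by blast
  qed
  then have "finite {m. pd k f m \<noteq> 0}"
    by (rule finite_subset) (use assms in \<open>simp add: is_dpoly_def\<close>)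
  then show ?thesis using assms by (auto simp: is_dpoly_def pd_def)
qed

lemma is_dpoly_dx:
  assumes "is_dpoly f"
  shows "is_dpoly (dx f)"
proof -
  define B where "B = ord_bound f"
  have bf: "order_le B f" unfolding B_def by (rule order_le_ord_bound[OF assms])
  have supp: "{m. dx f m \<noteq> 0} \<subseteq> (\<Union>k\<le>B. add_mset (Suc k) ` {n. pd k f n \<noteq> 0})"
  proof
    fix m assume "m \<in> {m. dx f m \<noteq> 0}"
    then obtain k where k: "Suc k \<in># m" "pd k f (m - {#Suc k#}) \<noteq> 0"
      using dx_nonzeroE by blast
    have "k \<le> B" using k(2) pd_eq_0_if_order_less[OF bf, of k] by (metis not_less)
    moreover have "m = add_mset (Suc k) (m - {#Suc k#})" using k(1) by simp
    ultimately show "m \<in> (\<Union>k\<le>B. add_mset (Suc k) ` {n. pd k f n \<noteq> 0})"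
      using k(2) by blast
  qed
  have "finite (\<Union>k\<le>B. add_mset (Suc k) ` {n. pd k f n \<noteq> 0})"
    using is_dpoly_pd[OF assms] by (auto simp: is_dpoly_def)
  then have "finite {m. dx f m \<noteq> 0}" using supp by (rule finite_subset[rotated])
  moreover have "dx f m = 0" if "0 \<in># m" for m
  proof (rule ccontr)
    assume "dx f m \<noteq> 0"
    then obtain k where "Suc k \<in># m" "pd k f (m - {#Suc k#}) \<noteq> 0"
      by (rule dx_nonzeroE)
    moreover have "0 \<in># m - {#Suc k#}" using that by (simp add: in_diff_count)
    ultimately show False using is_dpoly_pd[OF assms, of k] by (auto simp: is_dpoly_def)
  qed
  ultimately show ?thesis by (simp add: is_dpoly_def)
qed

lemma is_dpoly_add: "is_dpoly f \<Longrightarrow> is_dpoly g \<Longrightarrow> is_dpoly (\<lambda>m. f m + g m)"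
  unfolding is_dpoly_def
  by (auto intro: finite_subset[of _ "{m. f m \<noteq> 0} \<union> {m. g m \<noteq> 0}"])

lemma is_dpoly_neg: "is_dpoly f \<Longrightarrow> is_dpoly (\<lambda>m. - f m)"
  unfolding is_dpoly_def by auto

lemma is_dpoly_diff: "is_dpoly f \<Longrightarrow> is_dpoly g \<Longrightarrow> is_dpoly (\<lambda>m. f m - g m)"
  unfolding is_dpoly_def
  by (auto intro: finite_subset[of _ "{m. f m \<noteq> 0} \<union> {m. g m \<noteq> 0}"])

lemma is_dpoly_zero: "is_dpoly (\<lambda>_. 0)"
  unfolding is_dpoly_def by auto

lemma is_dpoly_const_dp: "is_dpoly (const_dp c)"
  unfolding is_dpoly_def const_dp_def
  by (auto intro: finite_subset[of _ "{{#}}"])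

lemma vd_eq_sum:
  assumes "is_dpoly f" "order_le M f"
  shows "vd f = (\<lambda>m. \<Sum>i\<le>M. (neg_dx ^^ i) (pd i f) m)"
proof (rule ext)
  fix m
  have vanish: "(neg_dx ^^ i) (pd i f) m = 0" if "M < i \<or> ord_bound f < i" for i
    using that pd_eq_0_if_order_less[OF assms(2)]
      pd_eq_0_if_order_less[OF order_le_ord_bound[OF assms(1)]]
    by (metis neg_dx_pow_zero)
  have "vd f m = (\<Sum>i\<le>max M (ord_bound f). (neg_dx ^^ i) (pd i f) m)"
    unfolding vd_def by (rule sum.mono_neutral_left) (auto intro: vanish)
  also have "\<dots> = (\<Sum>i\<le>M. (neg_dx ^^ i) (pd i f) m)"
    by (rule sum.mono_neutral_right) (auto intro: vanish)
  finally show "vd f m = (\<Sum>i\<le>M. (neg_dx ^^ i) (pd i f) m)" .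
qed

lemma vd_add:
  assumes "is_dpoly f" "is_dpoly g"
  shows "vd (\<lambda>m. f m + g m) = (\<lambda>m. vd f m + vd g m)"
proof -
  define M where "M = max (ord_bound f) (ord_bound g)"
  have "order_le M f" "order_le M g"
    unfolding M_def using order_le_ord_bound[OF assms(1)] order_le_ord_bound[OF assms(2)]
    by (auto intro: order_le_mono)
  then show ?thesis
    using vd_eq_sum[OF assms(1)] vd_eq_sum[OF assms(2)]
      vd_eq_sum[OF is_dpoly_add[OF assms] order_le_add]
    by (simp add: pd_add neg_dx_pow_add sum.distrib)
qed

lemma vd_zero: "vd (\<lambda>_. 0) = (\<lambda>_. 0)"
  unfolding vd_def pd_zero neg_dx_pow_zero by simp

lemma vd_const_dp: "vd (const_dp c) = (\<lambda>_. 0)"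
  unfolding vd_def pd_const_dp neg_dx_pow_zero by simp

lemma sum_atMost_telescope_neg: "(\<Sum>i\<le>(n::nat). - a i + (if i = 0 then 0 else a (i - 1))) = - (a n :: 'a::ab_group_add)"
  by (induction n) (simp_all add: algebra_simps)

lemma vd_dx:
  assumes "is_dpoly f"
  shows "vd (dx f) = (\<lambda>_. 0)"
proof (rule ext)
  fix m
  define M where "M = ord_bound f"
  have bf: "order_le M f" unfolding M_def by (rule order_le_ord_bound[OF assms])
  define a where "a i = (neg_dx ^^ Suc i) (pd i f) m" for i
  have summand: "(neg_dx ^^ i) (pd i (dx f)) m = - a i + (if i = 0 then 0 else a (i - 1))" for i
  proof -
    have "pd i (dx f) = (\<lambda>m. dx (pd i f) m + (if i = 0 then 0 else pd (i - 1) f m))"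
      by (rule ext) (rule pd_dx)
    then have "(neg_dx ^^ i) (pd i (dx f)) m
        = (neg_dx ^^ i) (dx (pd i f)) m + (if i = 0 then 0 else (neg_dx ^^ i) (pd (i - 1) f) m)"
      by (cases "i = 0") (simp_all add: neg_dx_pow_add del: funpow.simps)
    then show ?thesis
      by (cases i) (simp_all add: a_def neg_dx_pow_dx del: funpow.simps)
  qed
  have "vd (dx f) m = (\<Sum>i\<le>Suc M. (neg_dx ^^ i) (pd i (dx f)) m)"
    using vd_eq_sum[OF is_dpoly_dx[OF assms] order_le_dx[OF bf]] by simp
  also have "\<dots> = - a (Suc M)" by (simp only: summand sum_atMost_telescope_neg)
  also have "a (Suc M) = 0"
    unfolding a_def using pd_eq_0_if_order_less[OF bf, of "Suc M"]
    by (simp add: neg_dx_pow_zero del: funpow.simps)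
  finally show "vd (dx f) m = 0" by simp
qed

lemma pd1_vd:
  assumes "is_dpoly f" "pd 0 f = (\<lambda>_. 0)"
  shows "pd 1 (vd f) = vd (pd 1 f)"
proof -
  define M where "M = ord_bound f"
  have bf: "order_le M f" unfolding M_def by (rule order_le_ord_bound[OF assms(1)])
  have "pd 0 (pd i f) = (\<lambda>_. 0)" for i
    by (simp add: pd_commute[of 0 i] assms(2) pd_zero)
  then have "pd 1 ((neg_dx ^^ i) (pd i f)) = (neg_dx ^^ i) (pd i (pd 1 f))" for i
    using pd1_neg_dx_pow pd_commute[of 1 i f] by simp
  then show ?thesis
    unfolding vd_eq_sum[OF assms(1) bf] vd_eq_sum[OF is_dpoly_pd[OF assms(1)] order_le_pd[OF bf]]
    by (simp add: pd_sum fun_eq_iff)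
qed

section \<open>Equality of local functionals\<close>

lemma same_functional_refl: "same_functional f f"
  unfolding same_functional_def
  by (rule exI[of _ 0], rule exI[of _ "\<lambda>_. 0"]) (simp add: is_dpoly_zero dx_zero const_dp_def)

lemma same_functional_sym:
  assumes "same_functional f g"
  shows "same_functional g f"
proof -
  obtain c g0 where g0: "is_dpoly g0" and fg: "\<And>m. f m - g m = const_dp c m + dx g0 m"
    using assms unfolding same_functional_def by blast
  have "g m - f m = const_dp (- c) m + dx (\<lambda>m. - g0 m) m" for m
  proof -
    have "g m - f m = - (f m - g m)" by simp
    then show ?thesis unfolding fg by (simp add: dx_neg const_dp_def)
  qed
  then show ?thesis using is_dpoly_neg[OF g0] unfolding same_functional_def by blast
qed

lemma same_functional_trans:
  assumes "same_functional f g" "same_functional g h"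
  shows "same_functional f h"
proof -
  obtain c1 g1 where g1: "is_dpoly g1" and fg: "\<And>m. f m - g m = const_dp c1 m + dx g1 m"
    using assms(1) unfolding same_functional_def by blast
  obtain c2 g2 where g2: "is_dpoly g2" and gh: "\<And>m. g m - h m = const_dp c2 m + dx g2 m"
    using assms(2) unfolding same_functional_def by blast
  have "f m - h m = const_dp (c1 + c2) m + dx (\<lambda>m. g1 m + g2 m) m" for m
  proof -
    have "f m - h m = (f m - g m) + (g m - h m)" by simp
    also have "\<dots> = (const_dp c1 m + const_dp c2 m) + (dx g1 m + dx g2 m)"
      unfolding fg gh by (simp add: algebra_simps)
    finally show ?thesis by (simp add: dx_add const_dp_def)
  qed
  then show ?thesis using is_dpoly_add[OF g1 g2] unfolding same_functional_def by blast
qed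

lemma same_functional_add_left:
  "same_functional f g \<Longrightarrow> same_functional (\<lambda>m. h m + f m) (\<lambda>m. h m + g m)"
  unfolding same_functional_def by simp

lemma same_functional_add_dx:
  "is_dpoly G \<Longrightarrow> same_functional (\<lambda>m. f m + dx G m) f"
  unfolding same_functional_def by (rule exI[of _ 0]) (auto simp: const_dp_def)

lemma same_functional_pd0:
  assumes "same_functional f g"
  shows "same_functional (pd 0 f) (pd 0 g)"
proof -
  obtain c g0 where g0: "is_dpoly g0" and fg: "\<And>m. f m - g m = const_dp c m + dx g0 m"
    using assms unfolding same_functional_def by blast
  have "pd 0 f m - pd 0 g m = const_dp 0 m + dx (pd 0 g0) m" for m
  proof -
    have "(\<lambda>m. f m - g m) = (\<lambda>m. const_dp c m + dx g0 m)" using fg by simp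
    then have "pd 0 f m - pd 0 g m = pd 0 (\<lambda>m. const_dp c m + dx g0 m) m"
      by (metis pd_diff)
    then show ?thesis by (simp add: pd_add pd_const_dp pd0_dx) (simp add: const_dp_def)
  qed
  then show ?thesis using is_dpoly_pd[OF g0] unfolding same_functional_def by blast
qed

lemma is_dpoly_if_same_functional:
  assumes "same_functional f g" "is_dpoly g"
  shows "is_dpoly f"
proof -
  obtain c g0 where "is_dpoly g0" and fg: "\<And>m. f m - g m = const_dp c m + dx g0 m"
    using assms(1) unfolding same_functional_def by blast
  then have "f = (\<lambda>m. g m + (\<lambda>m. const_dp c m + dx g0 m) m)"
    using fg by (metis eq_diff_eq add.commute)
  then show ?thesis
    using \<open>is_dpoly g0\<close> assms(2) by (simp add: is_dpoly_add is_dpoly_const_dp is_dpoly_dx)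
qed

lemma vd_eq_if_same_functional:
  assumes "same_functional f g" "is_dpoly g"
  shows "vd f = vd g"
proof -
  obtain c g0 where g0: "is_dpoly g0" and fg: "\<And>m. f m - g m = const_dp c m + dx g0 m"
    using assms(1) unfolding same_functional_def by blast
  then have "f = (\<lambda>m. g m + (\<lambda>m. const_dp c m + dx g0 m) m)"
    using fg by (metis eq_diff_eq add.commute)
  then show ?thesis
    using assms(2) g0
    by (simp add: vd_add is_dpoly_add is_dpoly_const_dp is_dpoly_dx vd_const_dp vd_dx)
qed

section \<open>Reduced densities\<close>

definition reduced :: "nat \<Rightarrow> dpoly \<Rightarrow> bool" where
  "reduced e N \<longleftrightarrow> is_dpoly N \<and> homogeneous e N \<and>
     (\<forall>m. N m \<noteq> 0 \<longrightarrow> 2 \<le> count m (Max (set_mset m)))"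

lemma count_Max_eq_sum_mset_if_indices_le_1:
  assumes "0 \<notin># m" "indices_le 1 m"
  shows "count m (Max (set_mset m)) = sum_mset m"
proof (cases "m = {#}")
  case False
  have ones: "\<forall>x\<in>#m. x = 1"
  proof
    fix x assume "x \<in># m"
    then have "x \<le> 1" using assms(2) by (auto simp: indices_le_def)
    moreover have "x \<noteq> 0" using \<open>x \<in># m\<close> assms(1) by metis
    ultimately show "x = 1" by simp
  qed
  have "Max (set_mset m) = 1"
    using False ones by (intro Max_eqI) auto
  moreover have "sum_mset m = count m 1"
    using ones by (induction m) auto
  ultimately show ?thesis by simp
qed simp

text \<open>On a monomial \<open>u\<^sub>b\<^sub>+\<^sub>1 X\<close> with \<open>X\<close> of order at most \<open>b\<close>, only the term
  \<open>u\<^sub>b\<^sub>+\<^sub>1 \<partial>/\<partial>u\<^sub>b\<close> of \<open>\<partial>\<^sub>x\<close> can contribute when \<open>P\<close> has order at most \<open>b\<close>.\<close>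
lemma dx_top_monomial:
  assumes "order_le b P" "indices_le b n" "1 \<le> b"
  shows "dx P (add_mset (Suc b) n) = of_nat (count n b + 1) * P (add_mset b n)"
proof -
  define m where "m = add_mset (Suc b) n"
  define N where "N = sum_mset m"
  have bN: "indices_le N m" unfolding N_def by (rule indices_le_sum_mset)
  then have "b < N" unfolding m_def by simp
  have summand: "mul_var (Suc k) (pd k P) m
      = (if k = b then of_nat (count n b + 1) * P (add_mset b n) else 0)" for k
  proof (cases "k = b \<or> Suc k \<notin># m")
    case True
    then show ?thesis using assms(3) by (auto simp: m_def mul_var_def pd_def)
  next
    case False
    then have "m - {#Suc k#} = add_mset (Suc b) (n - {#Suc k#})" by (simp add: m_def)
    then have "pd k P (m - {#Suc k#}) = 0"
      using order_le_pd[OF assms(1), of k] by (auto simp: order_le_def)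
    then show ?thesis using False by (simp add: mul_var_def)
  qed
  have "dx P m = dx_upto N P m" by (rule dx_eq_dx_upto[OF bN])
  also have "\<dots> = of_nat (count n b + 1) * P (add_mset b n)"
    unfolding dx_upto_def summand using \<open>b < N\<close> by (simp add: sum.delta)
  finally show ?thesis unfolding m_def .
qed

lemma neg_dx_pow_top_monomial:
  assumes "order_le a P" "indices_le a n" "1 \<le> a"
  shows "(neg_dx ^^ Suc j) P (add_mset (a + Suc j) n)
       = (-1) ^ Suc j * of_nat (count n a + 1) * P (add_mset a n)"
proof (induction j)
  case 0
  then show ?case using dx_top_monomial[OF assms] by (simp add: algebra_simps)
next
  case (Suc j)
  define b where "b = a + Suc j"
  have bb: "order_le b ((neg_dx ^^ Suc j) P)"
    unfolding b_def by (rule order_le_neg_dx_pow[OF assms(1)])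
  have bn: "indices_le b n" unfolding b_def by (rule indices_le_mono[OF assms(2)]) simp
  have "count n b = 0"
    using assms(2) unfolding b_def indices_le_def by (simp add: count_eq_zero_iff) force
  then have "(neg_dx ^^ Suc (Suc j)) P (add_mset (a + Suc (Suc j)) n)
        = - ((neg_dx ^^ Suc j) P (add_mset b n))"
    using dx_top_monomial[OF bb bn] assms(3) by (simp add: b_def)
  then show ?case using Suc unfolding b_def by simp
qed

text \<open>The summands \<open>(-\<partial>\<^sub>x)\<^sup>i \<partial>N/\<partial>u\<^sub>i\<close> of \<open>\<delta>N/\<delta>u\<close> with \<open>i < a\<close> have order below \<open>2a\<close>,
  so only \<open>i = a\<close> contributes.\<close>
lemma vd_at_doubled_top:
  assumes "is_dpoly N" "order_le a N" "indices_le a n" "1 \<le> a"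
  shows "vd N (add_mset (a + a) n) = (-1) ^ a * of_nat (count n a + 1) * pd a N (add_mset a n)"
proof -
  define mu where "mu = add_mset (a + a) n"
  have low: "(neg_dx ^^ i) (pd i N) mu = 0" if "i < a" for i
  proof -
    have "order_le (a + i) ((neg_dx ^^ i) (pd i N))"
      by (rule order_le_neg_dx_pow[OF order_le_pd[OF assms(2)]])
    moreover have "\<not> indices_le (a + i) mu" using that by (simp add: mu_def)
    ultimately show ?thesis by (auto simp: order_le_def)
  qed
  obtain j where j: "a = Suc j" using assms(4) by (cases a) auto
  have "vd N mu = (\<Sum>i<a. (neg_dx ^^ i) (pd i N) mu) + (neg_dx ^^ a) (pd a N) mu"
    using vd_eq_sum[OF assms(1,2)] by (simp add: lessThan_Suc_atMost[symmetric])
  also have "\<dots> = (neg_dx ^^ a) (pd a N) mu" using low by simp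
  also have "\<dots> = (-1) ^ a * of_nat (count n a + 1) * pd a N (add_mset a n)"
    using neg_dx_pow_top_monomial[OF order_le_pd[OF assms(2)] assms(3,4), of j] j
    by (simp add: mu_def)
  finally show ?thesis unfolding mu_def .
qed

lemma top_order_monomialE:
  assumes "is_dpoly N" "N l0 \<noteq> 0" "l0 \<noteq> {#}"
  obtains a l where "1 \<le> a" "order_le a N" "N l \<noteq> 0" "a \<in># l"
proof -
  define S where "S = {0} \<union> (\<Union>m\<in>{m. N m \<noteq> 0}. set_mset m)"
  have "finite S" using assms(1) by (simp add: S_def is_dpoly_def)
  obtain x where x: "x \<in># l0" using assms(3) by (metis multiset_nonemptyE)
  have "0 \<notin># l0" using assms(1,2) by (auto simp: is_dpoly_def)
  then have "1 \<le> x" using x by (metis less_one not_less)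
  moreover have "x \<in> S" using x assms(2) by (auto simp: S_def)
  ultimately have "1 \<le> Max S" using \<open>finite S\<close> by (meson Max_ge order_trans)
  moreover have "Max S \<in> S" by (rule Max_in[OF \<open>finite S\<close>]) (simp add: S_def)
  ultimately obtain l where "N l \<noteq> 0" "Max S \<in># l" by (auto simp: S_def)
  moreover have "order_le (Max S) N"
    using order_le_ord_bound[OF assms(1)] by (simp add: ord_bound_def S_def)
  ultimately show ?thesis using that \<open>1 \<le> Max S\<close> by blast
qed

lemma reduced_eq_0_if_vd_eq_0:
  assumes "reduced e N" "1 \<le> e" "vd N = (\<lambda>_. 0)"
  shows "N = (\<lambda>_. 0)"
proof (rule ccontr)
  assume "N \<noteq> (\<lambda>_. 0)"
  then obtain l0 where "N l0 \<noteq> 0" by auto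
  moreover have "l0 \<noteq> {#}"
    using \<open>N l0 \<noteq> 0\<close> assms(1,2) by (auto simp: reduced_def homogeneous_def)
  ultimately obtain a l where a: "1 \<le> a" "order_le a N" and l: "N l \<noteq> 0" "a \<in># l"
    using top_order_monomialE assms(1) unfolding reduced_def by metis
  have "indices_le a l" using a(2) l(1) by (auto simp: order_le_def)
  then have "Max (set_mset l) = a"
    using l(2) by (intro Max_eqI) (auto simp: indices_le_def)
  then have "2 \<le> count l a" using assms(1) l(1) by (auto simp: reduced_def)
  moreover obtain l1 where l1: "l = add_mset a l1" using l(2) by (metis multi_member_split)
  ultimately have "a \<in># l1" by (simp flip: count_greater_zero_iff)
  then obtain n where ln: "l = add_mset a (add_mset a n)" using l1 by (metis multi_member_split)
  have "indices_le a n" using \<open>indices_le a l\<close> ln by simp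
  have "vd N (add_mset (a + a) n)
      = (-1) ^ a * of_nat (count n a + 1) * (of_nat (count n a + 2) * N l)"
    using vd_at_doubled_top[OF _ a(2) \<open>indices_le a n\<close> a(1)] assms(1) a(1)
    by (simp add: reduced_def pd_def ln)
  moreover have "(-1) ^ a * of_nat (count n a + 1) * (of_nat (count n a + 2) * N l) \<noteq> (0 :: complex fps)"
  proof -
    have "(of_nat (count n a + 1) :: complex fps) \<noteq> 0" "(of_nat (count n a + 2) :: complex fps) \<noteq> 0"
      by (simp_all only: of_nat_eq_0_iff)
    then show ?thesis using l(1) by (simp only: mult_eq_0_iff power_eq_0_iff) simp
  qed
  ultimately show False using assms(3) by simp
qed

lemma reduced_eq_0_if_same_functional_0:
  assumes "reduced e N" "1 \<le> e" "same_functional N (\<lambda>_. 0)"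
  shows "N = (\<lambda>_. 0)"
  using reduced_eq_0_if_vd_eq_0[OF assms(1,2)] vd_eq_if_same_functional[OF assms(3) is_dpoly_zero]
  by (simp add: vd_zero)

lemma reduced_pd0:
  assumes "reduced e N"
  shows "reduced e (pd 0 N)"
proof -
  have "pd 0 N m \<noteq> 0 \<Longrightarrow> N m \<noteq> 0" for m by (auto simp: pd_def simp del: fps_deriv_eq_0_iff)
  then show ?thesis using assms is_dpoly_pd unfolding reduced_def homogeneous_def by metis
qed

lemma reduced_pd1:
  assumes "reduced d N" "3 \<le> d"
  shows "reduced (d - 1) (pd 1 N)"
  unfolding reduced_def
proof (intro conjI allI impI)
  show "is_dpoly (pd 1 N)" using assms(1) is_dpoly_pd by (auto simp: reduced_def)
  have N1: "N (add_mset 1 m) \<noteq> 0" if "pd 1 N m \<noteq> 0" for m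
    using that by (simp add: pd_def)
  then show "homogeneous (d - 1) (pd 1 N)"
    using assms(1) unfolding reduced_def homogeneous_def by fastforce
  fix m assume "pd 1 N m \<noteq> 0"
  then have "N (add_mset 1 m) \<noteq> 0" by (rule N1)
  then have sum: "sum_mset m = d - 1"
    and top: "2 \<le> count (add_mset 1 m) (Max (set_mset (add_mset 1 m)))"
    and "0 \<notin># m"
    using assms(1) by (auto simp: reduced_def homogeneous_def is_dpoly_def)
  show "2 \<le> count m (Max (set_mset m))"
  proof (cases "indices_le 1 m")
    case True
    then show ?thesis
      using count_Max_eq_sum_mset_if_indices_le_1[OF \<open>0 \<notin># m\<close>] sum assms(2) by simp
  next
    case False
    then obtain x where "x \<in># m" "1 < x" by (auto simp: indices_le_def)
    then have "1 < Max (set_mset m)" by (meson Max_ge finite_set_mset less_le_trans)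
    moreover have "Max (insert 1 (set_mset m)) = max 1 (Max (set_mset m))"
      using \<open>x \<in># m\<close> by (intro Max_insert) auto
    ultimately have "Max (set_mset (add_mset 1 m)) = Max (set_mset m)" by simp
    then show ?thesis using top \<open>1 < Max (set_mset m)\<close> by simp
  qed
qed

section \<open>Reduction modulo \<open>Im \<partial>\<^sub>x\<close>\<close>

lemma homogeneous_diff:
  "homogeneous e f \<Longrightarrow> homogeneous e g \<Longrightarrow> homogeneous e (\<lambda>m. f m - g m)"
  unfolding homogeneous_def by (metis diff_zero diff_self)

lemma homogeneous_dx:
  assumes "homogeneous e f"
  shows "homogeneous (Suc e) (dx f)"
  unfolding homogeneous_def
proof (intro allI impI)
  fix m assume "dx f m \<noteq> 0"
  then obtain k where k: "Suc k \<in># m" "pd k f (m - {#Suc k#}) \<noteq> 0"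
    by (rule dx_nonzeroE)
  obtain n where m: "m = add_mset (Suc k) n" using k(1) by (metis multi_member_split)
  show "sum_mset m = Suc e"
  proof (cases "k = 0")
    case True
    then have "f (m - {#Suc k#}) \<noteq> 0" using k(2) unfolding pd_def by (metis fps_deriv_0)
    then have "f n \<noteq> 0" by (simp add: m)
    then show ?thesis using assms True m by (auto simp: homogeneous_def)
  next
    case False
    then have "f (add_mset k n) \<noteq> 0" using k(2) unfolding pd_def m by auto
    then show ?thesis using assms m by (auto simp: homogeneous_def)
  qed
qed

lemma reduced_add: "reduced e f \<Longrightarrow> reduced e g \<Longrightarrow> reduced e (\<lambda>m. f m + g m)"
  unfolding reduced_def homogeneous_def
  using is_dpoly_add by (metis add.right_neutral add.left_neutral)

lemma reduced_if_order_le_1: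
  assumes "2 \<le> d" "is_dpoly g" "homogeneous d g" "order_le 1 g"
  shows "reduced d g"
  unfolding reduced_def
proof (intro conjI allI impI assms(2,3))
  fix m assume "g m \<noteq> 0"
  then have "0 \<notin># m" "indices_le 1 m" "sum_mset m = d"
    using assms(2-4) by (auto simp: is_dpoly_def order_le_def homogeneous_def)
  then show "2 \<le> count m (Max (set_mset m))"
    using count_Max_eq_sum_mset_if_indices_le_1 assms(1) by simp
qed

definition repeated_top :: "nat \<Rightarrow> dpoly \<Rightarrow> dpoly" where
  "repeated_top T g = (\<lambda>m. if 2 \<le> count m T then g m else 0)"

lemma reduced_repeated_top:
  assumes "is_dpoly g" "homogeneous d g" "order_le T g"
  shows "reduced d (repeated_top T g)"
  unfolding reduced_def
proof (intro conjI allI impI)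
  show "is_dpoly (repeated_top T g)"
    using assms(1) unfolding is_dpoly_def repeated_top_def
    by (auto intro: finite_subset[of _ "{m. g m \<noteq> 0}"])
  show "homogeneous d (repeated_top T g)"
    using assms(2) by (simp add: homogeneous_def repeated_top_def)
  fix m assume "repeated_top T g m \<noteq> 0"
  then have c: "2 \<le> count m T" and "g m \<noteq> 0" by (auto simp: repeated_top_def split: if_splits)
  then have "indices_le T m" using assms(3) by (simp add: order_le_def)
  moreover have "T \<in># m" using c by (simp flip: count_greater_zero_iff)
  ultimately have "Max (set_mset m) = T" by (intro Max_eqI) (auto simp: indices_le_def)
  then show "2 \<le> count m (Max (set_mset m))" using c by simp
qed

text \<open>Since \<open>\<partial>\<^sub>x(u\<^sub>a\<^sup>c\<^sup>+\<^sup>1 X) = (c + 1) u\<^sub>a\<^sub>+\<^sub>1 u\<^sub>a\<^sup>c X + (terms of order at most \<open>a\<close>)\<close> when \<open>X\<close> has order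
  at most \<open>a\<close> and does not contain \<open>u\<^sub>a\<close>, \<open>\<partial>\<^sub>x\<close> of this density reproduces, up to order \<open>a\<close>, the
  monomials of \<open>g\<close> in which \<open>u\<^sub>a\<^sub>+\<^sub>1\<close> occurs exactly once alongside variables of order at most \<open>a\<close>.\<close>
definition top_antideriv :: "nat \<Rightarrow> dpoly \<Rightarrow> dpoly" where
  "top_antideriv a g = (\<lambda>n. if a \<in># n \<and> indices_le a n
     then fps_const (inverse (of_nat (count n a))) * g (add_mset (Suc a) (n - {#a#})) else 0)"

lemma order_le_top_antideriv: "order_le a (top_antideriv a g)"
  by (auto simp: order_le_def top_antideriv_def)

lemma is_dpoly_top_antideriv:
  assumes "1 \<le> a" "is_dpoly g"
  shows "is_dpoly (top_antideriv a g)"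
proof -
  have "{n. top_antideriv a g n \<noteq> 0} \<subseteq> (\<lambda>m. add_mset a (m - {#Suc a#})) ` {m. g m \<noteq> 0}"
  proof
    fix n assume "n \<in> {n. top_antideriv a g n \<noteq> 0}"
    then have "a \<in># n" "g (add_mset (Suc a) (n - {#a#})) \<noteq> 0"
      by (auto simp: top_antideriv_def split: if_splits)
    moreover have "n = add_mset a (add_mset (Suc a) (n - {#a#}) - {#Suc a#})"
      using \<open>a \<in># n\<close> by simp
    ultimately show "n \<in> (\<lambda>m. add_mset a (m - {#Suc a#})) ` {m. g m \<noteq> 0}" by blast
  qed
  then have "finite {n. top_antideriv a g n \<noteq> 0}"
    by (rule finite_subset) (use assms(2) in \<open>simp add: is_dpoly_def\<close>)
  moreover have "top_antideriv a g n = 0" if "0 \<in># n" for n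
  proof -
    have "0 \<in># add_mset (Suc a) (n - {#a#})" using that assms(1) by (simp add: in_diff_count)
    then show ?thesis using assms(2) by (simp add: top_antideriv_def is_dpoly_def)
  qed
  ultimately show ?thesis by (auto simp: is_dpoly_def)
qed

lemma homogeneous_top_antideriv:
  assumes "homogeneous d g"
  shows "homogeneous (d - 1) (top_antideriv a g)"
  unfolding homogeneous_def
proof (intro allI impI)
  fix n assume "top_antideriv a g n \<noteq> 0"
  then have "a \<in># n" and "g (add_mset (Suc a) (n - {#a#})) \<noteq> 0"
    by (auto simp: top_antideriv_def split: if_splits)
  moreover obtain n' where "n = add_mset a n'" using \<open>a \<in># n\<close> by (metis multi_member_split)
  ultimately show "sum_mset n = d - 1" using assms by (auto simp: homogeneous_def)
qed

lemma of_nat_mult_fps_const_inverse: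
  "(of_nat (Suc k) :: 'a::field_char_0 fps) * (fps_const (inverse (of_nat (Suc k))) * y) = y"
proof -
  have "(of_nat (Suc k) :: 'a fps) * fps_const (inverse (of_nat (Suc k)))
      = fps_const (of_nat (Suc k) * inverse (of_nat (Suc k)))"
    by (simp only: fps_of_nat[symmetric] fps_const_mult)
  also have "\<dots> = 1" by (simp del: of_nat_Suc)
  finally show ?thesis by (simp add: mult.assoc[symmetric])
qed

lemma dx_top_antideriv:
  assumes "1 \<le> a" "\<not> indices_le a m"
  shows "dx (top_antideriv a g) m = (if Suc a \<in># m \<and> indices_le a (m - {#Suc a#}) then g m else 0)"
proof (cases "Suc a \<in># m \<and> indices_le a (m - {#Suc a#})")
  case True
  define n where "n = m - {#Suc a#}"
  have m: "m = add_mset (Suc a) n" and n: "indices_le a n" using True by (simp_all add: n_def)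
  have "dx (top_antideriv a g) m = of_nat (count n a + 1) * top_antideriv a g (add_mset a n)"
    unfolding m by (rule dx_top_monomial[OF order_le_top_antideriv n assms(1)])
  also have "\<dots> = g m"
    using n by (simp add: top_antideriv_def m of_nat_mult_fps_const_inverse del: of_nat_Suc)
  finally show ?thesis using True by simp
next
  case False
  have "dx (top_antideriv a g) m = 0"
  proof (rule ccontr)
    assume "dx (top_antideriv a g) m \<noteq> 0"
    then obtain k where k: "Suc k \<in># m" "pd k (top_antideriv a g) (m - {#Suc k#}) \<noteq> 0"
      by (rule dx_nonzeroE)
    have "k \<le> a"
      using k(2) pd_eq_0_if_order_less[OF order_le_top_antideriv, of a k] by (metis not_less)
    moreover have "indices_le a (m - {#Suc k#})"
      using k(2) order_le_pd[OF order_le_top_antideriv, of a k g] by (auto simp: order_le_def)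
    moreover have "m = add_mset (Suc k) (m - {#Suc k#})" using k(1) by simp
    ultimately have "Suc k \<le> a \<longleftrightarrow> indices_le a m" by (metis indices_le_add_mset)
    then have "k = a" using \<open>k \<le> a\<close> assms(2) by linarith
    then show False using False k(1) \<open>indices_le a (m - {#Suc k#})\<close> by simp
  qed
  then show ?thesis using False by auto
qed

text \<open>At order \<open>a + 1\<close>, what is not reduced is exactly what \<open>dx (top_antideriv a g)\<close>
  reproduces.\<close>
lemma order_le_reduction_step:
  assumes "1 \<le> a" "order_le (Suc a) g"
  shows "order_le a (\<lambda>m. g m - repeated_top (Suc a) g m - dx (top_antideriv a g) m)"
  unfolding order_le_def
proof (intro allI impI)
  fix m assume nz: "g m - repeated_top (Suc a) g m - dx (top_antideriv a g) m \<noteq> 0"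
  show "indices_le a m"
  proof (rule ccontr)
    assume low: "\<not> indices_le a m"
    note dx = dx_top_antideriv[OF assms(1) low, of g]
    have "g m \<noteq> 0" using nz dx by (auto simp: repeated_top_def split: if_splits)
    then have "indices_le (Suc a) m" using assms(2) by (simp add: order_le_def)
    moreover obtain x where "x \<in># m" "a < x" using low by (auto simp: indices_le_def)
    ultimately have "Suc a \<in># m" by (metis indices_le_def Suc_leI le_antisym)
    show False
    proof (cases "2 \<le> count m (Suc a)")
      case True
      then have "Suc a \<in># m - {#Suc a#}" by (simp add: in_diff_count)
      then have "\<not> indices_le a (m - {#Suc a#})" unfolding indices_le_def by (metis Suc_n_not_le_n)
      then show False using nz dx True by (simp add: repeated_top_def)
    next
      case False
      have "indices_le a (m - {#Suc a#})" unfolding indices_le_def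
      proof
        fix y assume y: "y \<in># m - {#Suc a#}"
        then have "y \<le> Suc a"
          using \<open>indices_le (Suc a) m\<close> by (auto simp: indices_le_def dest: in_diffD)
        moreover have "y \<noteq> Suc a" using y False \<open>Suc a \<in># m\<close> by (auto simp: in_diff_count)
        ultimately show "y \<le> a" by simp
      qed
      then show False using nz dx False \<open>Suc a \<in># m\<close> by (simp add: repeated_top_def)
    qed
  qed
qed

lemma exists_reduced_same_functional:
  assumes "2 \<le> d" "is_dpoly g" "homogeneous d g" "order_le a g"
  shows "\<exists>N. reduced d N \<and> same_functional g N"
  using assms(2-)
proof (induction a arbitrary: g)
  case 0
  then have "reduced d g"
    using reduced_if_order_le_1[OF assms(1)] order_le_mono[of 0 g 1] by simp
  then show ?case using same_functional_refl by blast
next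
  case (Suc a g)
  show ?case
  proof (cases "a = 0")
    case True
    then have "reduced d g" using reduced_if_order_le_1[OF assms(1)] Suc.prems by simp
    then show ?thesis using same_functional_refl by blast
  next
    case False
    then have "1 \<le> a" by simp
    define g1 where "g1 = repeated_top (Suc a) g"
    define G where "G = top_antideriv a g"
    define g2 where "g2 m = g m - g1 m - dx G m" for m
    have G: "is_dpoly G" "homogeneous (d - 1) G"
      unfolding G_def using is_dpoly_top_antideriv[OF \<open>1 \<le> a\<close> Suc.prems(1)]
        homogeneous_top_antideriv[OF Suc.prems(2)] by auto
    have g1: "reduced d g1"
      unfolding g1_def by (rule reduced_repeated_top[OF Suc.prems])
    then have "is_dpoly g2" "homogeneous d g2"
      using G Suc.prems(1,2) homogeneous_dx[OF G(2)] assms(1) unfolding g2_def reduced_def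
      by (simp_all add: is_dpoly_diff is_dpoly_dx homogeneous_diff)
    moreover have "order_le a g2"
      unfolding g2_def g1_def G_def by (rule order_le_reduction_step[OF \<open>1 \<le> a\<close> Suc.prems(3)])
    ultimately obtain N2 where N2: "reduced d N2" "same_functional g2 N2"
      using Suc.IH by blast
    have "g = (\<lambda>m. (\<lambda>m. g1 m + g2 m) m + dx G m)" by (simp add: g2_def)
    then have "same_functional g (\<lambda>m. g1 m + g2 m)"
      using same_functional_add_dx[OF G(1)] by simp
    then have "same_functional g (\<lambda>m. g1 m + N2 m)"
      using same_functional_trans same_functional_add_left[OF N2(2), of g1] by blast
    then show ?thesis using reduced_add[OF g1 N2(1)] by blast
  qed
qed

section \<open>Combinations of the \<open>u\<^sub>\<lambda>\<close>\<close>

lemma pd0_partition_comb: "pd 0 (partition_comb d C) = (\<lambda>_. 0)"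
  by (simp add: pd_def partition_comb_def fun_eq_iff)

lemma pd1_partition_comb: "pd 1 (partition_comb d C) = (\<lambda>_. 0)"
  by (auto simp: pd_def partition_comb_def Pprime_def fun_eq_iff)

lemma vanishes_if_pd_eq_0:
  assumes "1 \<le> k" "pd k N = (\<lambda>_. 0)" "k \<in># m"
  shows "N m = 0"
proof -
  obtain n where m: "m = add_mset k n" using assms(3) by (metis multi_member_split)
  have "of_nat (count n k + 1) * N m = 0"
    using fun_cong[OF assms(2), of n] assms(1) by (simp add: pd_def m)
  moreover have "(of_nat (count n k + 1) :: complex fps) \<noteq> 0" by (simp only: of_nat_eq_0_iff)
  ultimately show ?thesis by simp
qed

lemma eq_partition_comb_if_pd_eq_0:
  assumes "reduced d N" "pd 0 N = (\<lambda>_. 0)" "pd 1 N = (\<lambda>_. 0)"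
  shows "N = partition_comb d (\<lambda>m. fps_nth (N m) 0)"
proof
  fix m
  show "N m = partition_comb d (\<lambda>m. fps_nth (N m) 0) m"
  proof (cases "N m = 0")
    case False
    have "0 \<notin># m" using False assms(1) by (auto simp: reduced_def is_dpoly_def)
    moreover have "1 \<notin># m" using False vanishes_if_pd_eq_0[OF _ assms(3)] by auto
    ultimately have "\<forall>k\<in>#m. 2 \<le> k"
    proof (intro ballI)
      fix k assume "k \<in># m"
      then have "k \<noteq> 0" "k \<noteq> 1" using \<open>0 \<notin># m\<close> \<open>1 \<notin># m\<close> by metis+
      then show "2 \<le> k" by arith
    qed
    moreover have top: "2 \<le> count m (Max (set_mset m))" and "sum_mset m = d"
      using False assms(1) by (auto simp: reduced_def homogeneous_def)
    moreover have "2 \<le> size m" using top count_le_size[of m] by (rule order_trans)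
    ultimately have "m \<in> Pprime d" by (simp add: Pprime_def)
    moreover have "N m = fps_const (fps_nth (N m) 0)"
      using fun_cong[OF assms(2), of m] by (simp add: pd_def)
    ultimately show ?thesis by (simp add: partition_comb_def)
  qed (simp add: partition_comb_def)
qed

lemma reduced_eq_partition_comb:
  assumes "reduced d N" "3 \<le> d" "same_functional (pd 0 N) (\<lambda>_. 0)" "pd 1 (vd N) = (\<lambda>_. 0)"
  shows "N = partition_comb d (\<lambda>m. fps_nth (N m) 0)"
proof -
  have "is_dpoly N" using assms(1) by (simp add: reduced_def)
  have pd0: "pd 0 N = (\<lambda>_. 0)"
    using reduced_eq_0_if_same_functional_0[OF reduced_pd0[OF assms(1)] _ assms(3)] assms(2) by simp
  then have "vd (pd 1 N) = (\<lambda>_. 0)" using pd1_vd[OF \<open>is_dpoly N\<close>] assms(4) by simp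
  then have "pd 1 N = (\<lambda>_. 0)"
    using reduced_eq_0_if_vd_eq_0[OF reduced_pd1[OF assms(1,2)]] assms(2) by simp
  then show ?thesis by (rule eq_partition_comb_if_pd_eq_0[OF assms(1) pd0])
qed

lemma conditions_if_same_functional_partition_comb:
  assumes "same_functional (partition_comb d C) h" "is_dpoly h"
  shows "same_functional (pd 0 h) (\<lambda>_. 0) \<and> pd 1 (vd h) = (\<lambda>_. 0)"
proof
  show "same_functional (pd 0 h) (\<lambda>_. 0)"
    using same_functional_sym[OF same_functional_pd0[OF assms(1)]] by (simp add: pd0_partition_comb)
  have "pd 1 (vd h) = pd 1 (vd (partition_comb d C))"
    by (simp only: vd_eq_if_same_functional[OF assms])
  also have "\<dots> = vd (pd 1 (partition_comb d C))"
    using is_dpoly_if_same_functional[OF assms] pd0_partition_comb by (rule pd1_vd)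
  also have "\<dots> = (\<lambda>_. 0)" by (simp only: pd1_partition_comb vd_zero)
  finally show "pd 1 (vd h) = (\<lambda>_. 0)" .
qed

theorem lemma8p5:
  fixes d :: nat and h :: dpoly
  assumes "d \<ge> 4" and "is_dpoly h" and "homogeneous d h"
  shows "(\<exists>C. same_functional (partition_comb d C) h) \<longleftrightarrow>
           (same_functional (pd 0 h) (\<lambda>_. 0) \<and> pd 1 (vd h) = (\<lambda>_. 0))"
proof
  assume "\<exists>C. same_functional (partition_comb d C) h"
  then show "same_functional (pd 0 h) (\<lambda>_. 0) \<and> pd 1 (vd h) = (\<lambda>_. 0)"
    using conditions_if_same_functional_partition_comb assms(2) by blast
next
  assume hyp: "same_functional (pd 0 h) (\<lambda>_. 0) \<and> pd 1 (vd h) = (\<lambda>_. 0)"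
  have "2 \<le> d" "3 \<le> d" using assms(1) by simp_all
  then obtain N where N: "reduced d N" "same_functional h N"
    using exists_reduced_same_functional assms(2,3) order_le_ord_bound[OF assms(2)] by blast
  then have "is_dpoly N" by (simp add: reduced_def)
  have "same_functional (pd 0 N) (\<lambda>_. 0)"
    using same_functional_trans[OF same_functional_pd0[OF same_functional_sym[OF N(2)]]] hyp by blast
  moreover have "pd 1 (vd N) = (\<lambda>_. 0)"
    using hyp vd_eq_if_same_functional[OF N(2) \<open>is_dpoly N\<close>] by simp
  ultimately have "N = partition_comb d (\<lambda>m. fps_nth (N m) 0)"
    using reduced_eq_partition_comb[OF N(1) \<open>3 \<le> d\<close>] by blast
  then have "same_functional (partition_comb d (\<lambda>m. fps_nth (N m) 0)) h"
    using same_functional_sym[OF N(2)] by (subst (asm) (1) \<open>N = _\<close>)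
  then show "\<exists>C. same_functional (partition_comb d C) h" by blast
qed

end
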